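(* Let $B,W,T$ be positive integers with $W\ge B+1$ and let $T_{\mathrm{eff}}=\min(W-1,T)$. For the channel $\mathcal{C}(N=1,B,W)$ there exists a streaming code with delay $T$ and rate \[ R=\begin{cases}\frac{T_{\mathrm{eff}}}{T_{\mathrm{eff}}+B}, & T_{\mathrm{eff}}\ge B,\\ 0, & \text{else}.\end{cases} \]
   Context: Channel $\mathcal{C}(N,B,W)$: a packet erasure channel on channel uses $i=0,1,2,\dots$ such that in every sliding window of $W$ consecutive channel uses the erased positions form either a single burst of length at most $B$ or at most $N$ arbitrary erasures (for $N=1$: at most one burst of length at most $B$ per window). Streaming code: at time $i$ the encoder observes $\mathbf{s}[i]\in\mathbb{F}_q^k$ and transmits $\mathbf{x}[i]=f_i(\mathbf{s}[0],\dots,\mathbf{s}[i])\in\mathbb{F}_q^n$; outputs are $\mathbf{y}[i]\in\{\mathbf{x}[i],\star\}$. Delay $T$ means $\mathbf{s}[i]=g_i(\mathbf{y}[0],\dots,\mathbf{y}[i+T])$ for all $i$, all sources and all admissible erasure patterns. Rate $R=k/n$. *)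

theory Defs
  imports Complex_Main "HOL-Number_Theory.Prime_Powers"
begin

text \<open>Symbols of F_q^m, represented (as sets) by length-m words over the alphabet {0..<q}.
  Encoder and decoder are arbitrary functions, so only the underlying sets matter.\<close>
definition alph :: "nat \<Rightarrow> nat \<Rightarrow> nat list set" where
  "alph q m = {v. length v = m \<and> set v \<subseteq> {..<q}}"

definition admissible_burst :: "nat \<Rightarrow> nat \<Rightarrow> (nat \<Rightarrow> bool) \<Rightarrow> bool" where
  "admissible_burst B W E \<longleftrightarrow>
     (\<forall>i. \<exists>j l. l \<le> B \<and> {t. i \<le> t \<and> t < i + W \<and> E t} = {j..<j + l})"

definition channel_out :: "(nat \<Rightarrow> bool) \<Rightarrow> (nat \<Rightarrow> nat list) \<Rightarrow> nat \<Rightarrow> nat list option" where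
  "channel_out E x i = (if E i then None else Some (x i))"

definition streaming_code ::
  "nat \<Rightarrow> nat \<Rightarrow> nat \<Rightarrow> nat \<Rightarrow> nat \<Rightarrow> nat \<Rightarrow>
   (nat \<Rightarrow> (nat \<Rightarrow> nat list) \<Rightarrow> nat list) \<Rightarrow>
   (nat \<Rightarrow> (nat \<Rightarrow> nat list option) \<Rightarrow> nat list) \<Rightarrow> bool" where
  "streaming_code q k n B W T f g \<longleftrightarrow>
     \<comment> \<open>encoder causality: x[i] depends only on s[0..i]\<close>
     (\<forall>i s s'. (\<forall>j\<le>i. s j = s' j) \<longrightarrow> f i s = f i s') \<and>
     \<comment> \<open>encoder outputs lie in F_q^n\<close>
     (\<forall>i s. (\<forall>j. s j \<in> alph q k) \<longrightarrow> f i s \<in> alph q n) \<and>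
     \<comment> \<open>decoder g_i depends only on y[0..i+T]\<close>
     (\<forall>i y y'. (\<forall>j\<le>i + T. y j = y' j) \<longrightarrow> g i y = g i y') \<and>
     \<comment> \<open>zero-error recovery with delay T for all sources and admissible patterns\<close>
     (\<forall>s E. (\<forall>j. s j \<in> alph q k) \<longrightarrow> admissible_burst B W E \<longrightarrow>
        (\<forall>i. g i (channel_out E (\<lambda>j. f j s)) = s i))"

end

theory Submission
  imports Defs
begin

text \<open>With D = min (W - 1) T, diagonally interleave a systematic binary code of length
  D + B: position p of codeword u is sent at time u + p. A burst erases at most B consecutive
  positions of each codeword, and the first erased information bit a is determined by the
  parities at positions D + r with a + B \<le> D + r \<le> D + a, which arrive after the burst
  and within the delay, provided the corresponding square submatrices of the parity check
  matrix are nonsingular over GF(2). The matrix is built along the Euclidean algorithm on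
  (D, B), as identity blocks stacked on the transpose of the matrix for (B, D mod B); its
  windows of B consecutive rows and its lower right corners are then nonsingular by
  induction, because a square GF(2) matrix is nonsingular iff its transpose is. Earlier
  source symbols are already decoded, so decoding proceeds symbol by symbol.\<close>

lemma odd_card_sym_diff:
  assumes "finite A" "finite A'"
  shows "odd (card (sym_diff A A')) \<longleftrightarrow> odd (card A) \<noteq> odd (card A')"
proof -
  have "card A = card (A - A') + card (A \<inter> A')" "card A' = card (A' - A) + card (A \<inter> A')"
    using assms by (simp_all add: card_Diff_subset_Int card_mono Int_commute)
  moreover have "card (sym_diff A A') = card (A - A') + card (A' - A)"
    using assms by (intro card_Un_disjoint) auto
  ultimately show ?thesis by presburger
qed

lemma odd_card_subset_singleton: "A \<subseteq> {x} \<Longrightarrow> odd (card A) \<longleftrightarrow> x \<in> A"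
  by (auto simp: subset_singleton_iff)

text \<open>GF(2) vectors are represented by their supports and matrices by relations.\<close>

definition row_parity :: "('a \<Rightarrow> 'b \<Rightarrow> bool) \<Rightarrow> 'b set \<Rightarrow> 'a \<Rightarrow> bool" where
  "row_parity M e p \<longleftrightarrow> odd (card {c \<in> e. M p c})"

definition nonsingular_on :: "('a \<Rightarrow> 'b \<Rightarrow> bool) \<Rightarrow> 'a set \<Rightarrow> 'b set \<Rightarrow> bool" where
  "nonsingular_on M R C \<longleftrightarrow> (\<forall>e \<subseteq> C. (\<forall>p \<in> R. \<not> row_parity M e p) \<longrightarrow> e = {})"

lemma nonsingular_onD:
  "nonsingular_on M R C \<Longrightarrow> e \<subseteq> C \<Longrightarrow> (\<And>p. p \<in> R \<Longrightarrow> \<not> row_parity M e p) \<Longrightarrow> e = {}"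
  unfolding nonsingular_on_def by blast

lemma row_parity_empty [simp]: "\<not> row_parity M {} p"
  by (simp add: row_parity_def)

lemma row_parity_sym_diff:
  assumes "finite e" "finite e'"
  shows "row_parity M (sym_diff e e') p \<longleftrightarrow> row_parity M e p \<noteq> row_parity M e' p"
proof -
  have "{c \<in> sym_diff e e'. M p c} = sym_diff {c \<in> e. M p c} {c \<in> e'. M p c}" by auto
  then show ?thesis unfolding row_parity_def using assms by (simp add: odd_card_sym_diff)
qed

lemma parity_double_count:
  assumes "finite h" "finite e"
  shows "odd (card {p \<in> h. row_parity M e p}) \<longleftrightarrow> odd (card {c \<in> e. row_parity M\<inverse>\<inverse> h c})"
proof -
  have "(\<Sum>p\<in>h. card {c \<in> e. M p c}) = (\<Sum>p\<in>h. \<Sum>c\<in>e. of_bool (M p c))"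
    using assms by (simp add: Int_def)
  also have "\<dots> = (\<Sum>c\<in>e. \<Sum>p\<in>h. of_bool (M p c))" by (rule sum.swap)
  also have "\<dots> = (\<Sum>c\<in>e. card {p \<in> h. M p c})" using assms by (simp add: Int_def)
  finally have "(\<Sum>p\<in>h. card {c \<in> e. M p c}) = (\<Sum>c\<in>e. card {p \<in> h. M p c})" .
  then show ?thesis
    using assms by (simp add: row_parity_def flip: even_sum_iff)
qed

text \<open>An injective M is onto by counting; a nonzero h with h M = 0 would make every
  image orthogonal to h, so no vector supported on a single point of h is an image.\<close>

lemma nonsingular_on_conversep:
  assumes "finite R" "finite C" "card R = card C" and M: "nonsingular_on M R C"
  shows "nonsingular_on M\<inverse>\<inverse> C R"
  unfolding nonsingular_on_def
proof (intro allI impI)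
  fix h assume "h \<subseteq> R" and h: "\<forall>c \<in> C. \<not> row_parity M\<inverse>\<inverse> h c"
  define image where "image e = {p \<in> R. row_parity M e p}" for e
  have "inj_on image (Pow C)"
  proof (rule inj_onI)
    fix e e' assume "e \<in> Pow C" "e' \<in> Pow C" "image e = image e'"
    then have "\<forall>p \<in> R. \<not> row_parity M (sym_diff e e') p"
      using \<open>finite C\<close> by (auto simp: image_def row_parity_sym_diff finite_subset)
    moreover have "sym_diff e e' \<subseteq> C" using \<open>e \<in> Pow C\<close> \<open>e' \<in> Pow C\<close> by blast
    ultimately have "sym_diff e e' = {}" using nonsingular_onD [OF M] by blast
    then show "e = e'" by blast
  qed
  moreover have "image ` Pow C \<subseteq> Pow R" by (auto simp: image_def)
  ultimately have onto: "image ` Pow C = Pow R"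
    using assms by (intro card_subset_eq) (auto simp: card_image card_Pow)
  show "h = {}"
  proof (rule ccontr)
    assume "h \<noteq> {}"
    then obtain x where "x \<in> h" by blast
    then have "{x} \<in> image ` Pow C" using onto \<open>h \<subseteq> R\<close> by auto
    then obtain e where e: "e \<subseteq> C" "image e = {x}" by auto
    have "finite h" "finite e" using assms(1,2) \<open>h \<subseteq> R\<close> e(1) by (auto simp: finite_subset)
    moreover have rows: "{p \<in> h. row_parity M e p} = {x}"
      using e(2) \<open>x \<in> h\<close> \<open>h \<subseteq> R\<close> unfolding image_def by blast
    moreover have columns: "{c \<in> e. row_parity M\<inverse>\<inverse> h c} = {}" using h e(1) by blast
    ultimately show False using parity_double_count [of h e M] unfolding rows columns by simp
  qed
qed

lemma ex_mod_eq_in_interval: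
  assumes "y < B"
  shows "\<exists>p. s \<le> p \<and> p < s + B \<and> p mod B = (y::nat)"
proof -
  have "0 < B" using assms by simp
  then have s: "s = s div B * B + s mod B" "s mod B < B" by simp_all
  show ?thesis
  proof (cases "s mod B \<le> y")
    case True
    have "(s div B * B + y) mod B = y" using assms by simp
    moreover have "s \<le> s div B * B + y" "s div B * B + y < s + B" using True assms s by linarith+
    ultimately show ?thesis by blast
  next
    case False
    have "((s div B + 1) * B + y) mod B = y" using assms by (simp only: mod_mult_self3) simp
    moreover have "s \<le> (s div B + 1) * B + y" "(s div B + 1) * B + y < s + B"
      using False s distrib_right [of "s div B" 1 B] by linarith+
    ultimately show ?thesis by blast
  qed
qed

lemma eq_if_mod_eq_in_interval:
  assumes "a \<le> p" "p < a + B" "p mod B = a mod (B::nat)"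
  shows "p = a"
proof -
  have "B dvd p - a" using assms by (simp add: mod_eq_dvd_iff_nat)
  then show ?thesis using assms by (metis dvd_imp_le le_antisym
        less_diff_conv2 nat_less_le zero_less_diff add.commute)
qed

lemma mod_last_period:
  assumes "B \<le> C" "B dvd C" "y < B"
  shows "(C - B + y) mod B = (y::nat)"
  using assms by (metis mod_less mod_add_left_eq dvd_diff_nat dvd_refl add_0 dvd_eq_mod_eq_0)

text \<open>For 0 < B, the rows p < T and columns r < B form the block matrix consisting of
  T div B identity blocks of size B above the transpose of parity_matrix B (T mod B).\<close>

function parity_matrix :: "nat \<Rightarrow> nat \<Rightarrow> nat \<Rightarrow> nat \<Rightarrow> bool" where
  "parity_matrix T B p r \<longleftrightarrow>
     (if B = 0 then False
      else if p < T div B * B then r = p mod B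
      else parity_matrix B (T mod B) r (p - T div B * B))"
  by auto
termination by (relation "measure (\<lambda>(T, B, p, r). B)") auto

declare parity_matrix.simps [simp del]

lemma le_div_mult_self:
  assumes "0 < B" "B \<le> T"
  shows "B \<le> T div B * (B::nat)"
proof -
  have "1 \<le> T div B" using assms by (simp add: Suc_le_eq div_greater_zero_iff)
  then show ?thesis using mult_le_mono1 [of 1 "T div B" B] by simp
qed

lemma parity_matrix_periodic:
  "0 < B \<Longrightarrow> p < T div B * B \<Longrightarrow> parity_matrix T B p r \<longleftrightarrow> r = p mod B"
  by (simp add: parity_matrix.simps)

lemma parity_matrix_tail:
  "0 < B \<Longrightarrow> parity_matrix T B (T div B * B + i) r \<longleftrightarrow> parity_matrix B (T mod B) r i"
  by (simp add: parity_matrix.simps)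

lemma parity_matrix_initial:
  assumes "0 < B" "B \<le> T" "p < B"
  shows "parity_matrix T B p r \<longleftrightarrow> r = p"
proof -
  have "p < T div B * B" using assms le_div_mult_self [of B T] by linarith
  then show ?thesis using parity_matrix_periodic [OF assms(1)] assms(3) by simp
qed

lemma row_parity_periodic:
  "0 < B \<Longrightarrow> p < T div B * B \<Longrightarrow> row_parity (parity_matrix T B) e p \<longleftrightarrow> p mod B \<in> e"
  unfolding row_parity_def by (subst odd_card_subset_singleton [of _ "p mod B"])
    (auto simp: parity_matrix_periodic)

lemma row_parity_tail:
  "0 < B \<Longrightarrow> row_parity (parity_matrix T B) e (T div B * B + i) \<longleftrightarrow>
     row_parity (parity_matrix B (T mod B))\<inverse>\<inverse> e i"
  unfolding row_parity_def by (simp add: parity_matrix_tail)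

lemma row_parity_initial:
  "0 < B \<Longrightarrow> B \<le> T \<Longrightarrow> p < B \<Longrightarrow> row_parity (parity_matrix T B) e p \<longleftrightarrow> p \<in> e"
  unfolding row_parity_def
  by (subst odd_card_subset_singleton [of _ p]) (auto simp: parity_matrix_initial)

lemma row_parity_last_period:
  assumes "0 < B" "B \<le> T" "y < B"
  shows "row_parity (parity_matrix T B) e (T div B * B - B + y) \<longleftrightarrow> y \<in> e"
proof -
  have "B \<le> T div B * B" using assms(1,2) by (rule le_div_mult_self)
  moreover have "(T div B * B - B + y) mod B = y"
    using mod_last_period [of B "T div B * B" y] calculation assms(3) by simp
  moreover have "T div B * B - B + y < T div B * B" using calculation(1) assms(3) by linarith
  ultimately show ?thesis using row_parity_periodic [OF assms(1)] by simp
qed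

lemma row_parity_conversep_initial:
  assumes "0 < b" "b \<le> B" "e \<subseteq> {..<b}"
  shows "row_parity (parity_matrix B b)\<inverse>\<inverse> e i \<longleftrightarrow> i \<in> e"
  unfolding row_parity_def using assms
  by (subst odd_card_subset_singleton [of _ i]) (auto simp: parity_matrix_initial)

lemma row_parity_conversep_split:
  assumes "0 < B" "finite h"
  shows "row_parity (parity_matrix T B)\<inverse>\<inverse> h r \<longleftrightarrow>
    odd (card {p \<in> h. p < T div B * B \<and> p mod B = r}) \<noteq>
    row_parity (parity_matrix B (T mod B)) {i. T div B * B + i \<in> h} r"
proof -
  define C where "C = T div B * B"
  have split: "{p \<in> h. parity_matrix T B p r} =
      {p \<in> h. p < C \<and> p mod B = r} \<union> (\<lambda>i. C + i) ` {i \<in> {i. C + i \<in> h}. parity_matrix B (T mod B) r i}"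
  proof (intro set_eqI iffI)
    fix p assume p: "p \<in> {p \<in> h. parity_matrix T B p r}"
    show "p \<in> {p \<in> h. p < C \<and> p mod B = r} \<union> (\<lambda>i. C + i) ` {i \<in> {i. C + i \<in> h}. parity_matrix B (T mod B) r i}"
    proof (cases "p < C")
      case True then show ?thesis using p assms(1) by (simp add: C_def parity_matrix_periodic)
    next
      case False
      then have "p = C + (p - C)" by simp
      moreover have "parity_matrix B (T mod B) r (p - C)"
        using p assms(1) \<open>p = C + (p - C)\<close> unfolding C_def by (metis mem_Collect_eq parity_matrix_tail)
      moreover have "C + (p - C) \<in> h" using p \<open>p = C + (p - C)\<close> by simp
      ultimately show ?thesis by (metis (no_types, lifting) UnI2 image_eqI mem_Collect_eq)
    qed
  next
    fix p assume "p \<in> {p \<in> h. p < C \<and> p mod B = r} \<union> (\<lambda>i. C + i) ` {i \<in> {i. C + i \<in> h}. parity_matrix B (T mod B) r i}"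
    then show "p \<in> {p \<in> h. parity_matrix T B p r}"
    proof
      assume "p \<in> {p \<in> h. p < C \<and> p mod B = r}"
      then show ?thesis using assms(1) by (simp add: C_def parity_matrix_periodic)
    next
      assume "p \<in> (\<lambda>i. C + i) ` {i \<in> {i. C + i \<in> h}. parity_matrix B (T mod B) r i}"
      then show ?thesis using assms(1) unfolding C_def by (auto simp: parity_matrix_tail)
    qed
  qed
  have "finite {i \<in> {i. C + i \<in> h}. parity_matrix B (T mod B) r i}"
    using finite_vimageI [OF assms(2), of "(+) C"] by (simp add: vimage_def inj_on_def)
  then have "card {p \<in> h. parity_matrix T B p r} =
      card {p \<in> h. p < C \<and> p mod B = r} + card {i \<in> {i. C + i \<in> h}. parity_matrix B (T mod B) r i}"
    unfolding split using assms(2) by (subst card_Un_disjoint) (auto simp: card_image)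
  then show ?thesis unfolding row_parity_def C_def by simp
qed

lemma nonsingular_on_window:
  assumes "0 < B" "B \<le> T" "s + B \<le> T"
  shows "nonsingular_on (parity_matrix T B) {s..<s + B} {..<B}"
  unfolding nonsingular_on_def
proof (intro allI impI)
  fix e assume e: "e \<subseteq> {..<B}"
    and rows: "\<forall>p \<in> {s..<s + B}. \<not> row_parity (parity_matrix T B) e p"
  define C where "C = T div B * B"
  define b where "b = T mod B"
  have "T = C + b" "b < B" using assms(1) by (simp_all add: C_def b_def)
  have below: "C + y < s + B" if y: "y \<in> e" for y
  proof -
    obtain p where p: "s \<le> p" "p < s + B" "p mod B = y"
      using ex_mod_eq_in_interval e y by blast
    have "\<not> p < C"
    proof
      assume "p < C"
      then have "row_parity (parity_matrix T B) e p"
        using row_parity_periodic [OF assms(1)] p y unfolding C_def by simp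
      then show False using rows p by auto
    qed
    moreover have "(C + (p - C)) mod B = p - C"
      using p \<open>T = C + b\<close> \<open>b < B\<close> assms(3) by (simp add: C_def)
    ultimately show ?thesis using p by simp
  qed
  have tail_rows: "\<not> row_parity (parity_matrix B b)\<inverse>\<inverse> e i" if "C + i < s + B" for i
  proof -
    have "s \<le> C + i" using that \<open>T = C + b\<close> \<open>b < B\<close> assms(3) by linarith
    then have "\<not> row_parity (parity_matrix T B) e (C + i)" using rows that by auto
    then show ?thesis using row_parity_tail [OF assms(1)] unfolding C_def b_def by simp
  qed
  show "e = {}"
  proof (rule ccontr)
    assume "e \<noteq> {}"
    then have "0 < b" using below \<open>T = C + b\<close> assms(3) by fastforce
    have "e \<subseteq> {..<b}" using below \<open>T = C + b\<close> assms(3) by fastforce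
    then show False using tail_rows below \<open>e \<noteq> {}\<close> \<open>0 < b\<close> \<open>b < B\<close>
      by (auto simp: row_parity_conversep_initial)
  qed
qed

lemma nonsingular_on_corner:
  assumes "0 < B" "B \<le> T" "m \<le> B"
  shows "nonsingular_on (parity_matrix T B) {T - m..<T} {B - m..<B}"
  using assms
proof (induction B arbitrary: T m rule: less_induct)
  case (less B)
  define C where "C = T div B * B"
  define b where "b = T mod B"
  have "T = C + b" "b < B" using less.prems by (simp_all add: C_def b_def)
  have "B \<le> C" using less.prems by (simp add: C_def le_div_mult_self)
  show ?case unfolding nonsingular_on_def
  proof (intro allI impI)
    fix e assume e: "e \<subseteq> {B - m..<B}"
      and rows: "\<forall>p \<in> {T - m..<T}. \<not> row_parity (parity_matrix T B) e p"
    have tail_rows: "\<not> row_parity (parity_matrix B b)\<inverse>\<inverse> e i" if "b - m \<le> i" "i < b" for i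
    proof -
      have "T - m \<le> C + i" "C + i < T" using that \<open>T = C + b\<close> by linarith+
      then have "\<not> row_parity (parity_matrix T B) e (C + i)" using rows by auto
      then show ?thesis using row_parity_tail [OF less.prems(1)] unfolding C_def b_def by simp
    qed
    show "e = {}"
    proof (cases "m \<le> b")
      case True
      show ?thesis
      proof (cases "m = 0")
        case False
        then have "nonsingular_on (parity_matrix B b) {B - m..<B} {b - m..<b}"
          using less.IH [of b B m] True \<open>b < B\<close> by simp
        then have "nonsingular_on (parity_matrix B b)\<inverse>\<inverse> {b - m..<b} {B - m..<B}"
          using True less.prems(3) by (intro nonsingular_on_conversep) auto
        then show ?thesis by (rule nonsingular_onD) (use e tail_rows in auto)
      qed (use e in auto)
    next
      case False
      have upper: "y \<notin> e" if "B - m + b \<le> y" "y < B" for y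
      proof -
        have "C - B + y \<in> {T - m..<T}"
          using that \<open>T = C + b\<close> \<open>B \<le> C\<close> less.prems(3) by auto
        then have "\<not> row_parity (parity_matrix T B) e (C - B + y)" using rows by blast
        then show ?thesis using row_parity_last_period [OF less.prems(1,2) \<open>y < B\<close>]
          by (simp add: C_def)
      qed
      have e_below: "e \<subseteq> {B - m..<B - m + b}"
      proof
        fix y assume "y \<in> e"
        then have "B - m \<le> y" "y < B" using e by auto
        moreover have "\<not> B - m + b \<le> y" using \<open>y \<in> e\<close> upper \<open>y < B\<close> by blast
        ultimately show "y \<in> {B - m..<B - m + b}" by simp
      qed
      show ?thesis
      proof (cases "b = 0")
        case False
        then have "nonsingular_on (parity_matrix B b) {B - m..<B - m + b} {..<b}"
          using nonsingular_on_window [of b B "B - m"] \<open>b < B\<close> \<open>\<not> m \<le> b\<close> less.prems(3) by simp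
        then have "nonsingular_on (parity_matrix B b)\<inverse>\<inverse> {..<b} {B - m..<B - m + b}"
          by (intro nonsingular_on_conversep) auto
        then show ?thesis by (rule nonsingular_onD) (use e_below tail_rows \<open>\<not> m \<le> b\<close> in auto)
      qed (use e_below in auto)
    qed
  qed
qed

lemma nonsingular_on_truncated_window:
  assumes "b \<le> B" "al \<le> B"
  shows "nonsingular_on (parity_matrix B b) {al - b..<al} {..<min al b}"
proof (cases "b \<le> al")
  case True
  show ?thesis
  proof (cases "b = 0")
    case False
    then show ?thesis using nonsingular_on_window [of b B "al - b"] True assms by simp
  qed (simp add: nonsingular_on_def)
next
  case False
  show ?thesis unfolding nonsingular_on_def
  proof (intro allI impI)
    fix e assume "e \<subseteq> {..<min al b}" "\<forall>p \<in> {al - b..<al}. \<not> row_parity (parity_matrix B b) e p"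
    then show "e = {}" using False assms(1) by (force simp: row_parity_initial)
  qed
qed

lemma row_parity_conversep_burst:
  assumes "0 < B" "h \<subseteq> {a..<a + B}" "finite h"
  shows "row_parity (parity_matrix T B)\<inverse>\<inverse> h r \<longleftrightarrow>
    (\<exists>p \<in> h. p < T div B * B \<and> p mod B = r) \<noteq>
    row_parity (parity_matrix B (T mod B)) {i. T div B * B + i \<in> h} r"
proof -
  have odd_iff: "odd (card {p \<in> h. p < T div B * B \<and> p mod B = r}) \<longleftrightarrow> (\<exists>p \<in> h. p < T div B * B \<and> p mod B = r)"
  proof (cases "\<exists>p \<in> h. p < T div B * B \<and> p mod B = r")
    case True
    then obtain p where p: "p \<in> h" "p < T div B * B" "p mod B = r" by blast
    have "q = p" if "q \<in> h" "q mod B = r" for q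
    proof -
      have "a \<le> p" "p < a + B" "a \<le> q" "q < a + B" using p(1) that(1) assms(2) by auto
      then show ?thesis using that p eq_if_mod_eq_in_interval [of p q B] eq_if_mod_eq_in_interval [of q p B]
        by (cases "p \<le> q") auto
    qed
    then have "{p \<in> h. p < T div B * B \<and> p mod B = r} \<subseteq> {p}" by blast
    then have "odd (card {p \<in> h. p < T div B * B \<and> p mod B = r})"
      using odd_card_subset_singleton [OF \<open>_ \<subseteq> {p}\<close>] p by simp
    then show ?thesis using True by simp
  next
    case False
    then have empty: "{p \<in> h. p < T div B * B \<and> p mod B = r} = {}" by auto
    show ?thesis unfolding empty using False by simp
  qed
  then show ?thesis using row_parity_conversep_split [OF assms(1,3), of T r] by blast
qed

text \<open>The parity r of a codeword is sent D + r - a steps after its position a; the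
  parities assumed to vanish are those received after a burst starting at a and within delay.\<close>

lemma burst_start_in_period:
  assumes "0 < B" "B \<le> D" "a + B \<le> D div B * B" and h: "h \<subseteq> {a..<a + B} \<inter> {..<D}"
    and parities: "\<And>r. r < B \<Longrightarrow> a + B \<le> D + r \<Longrightarrow> r \<le> a \<Longrightarrow>
      \<not> row_parity (parity_matrix D B)\<inverse>\<inverse> h r"
  shows "a \<notin> h"
proof -
  have "finite h" using h by (intro finite_subset [of h "{..<D}"]) auto
  have "{i. D div B * B + i \<in> h} = {}" using h assms(3) by auto
  moreover have "(\<exists>p \<in> h. p < D div B * B \<and> p mod B = a mod B) \<longleftrightarrow> a \<in> h"
    using h assms(1,3) eq_if_mod_eq_in_interval [of a _ B] by force
  ultimately have "row_parity (parity_matrix D B)\<inverse>\<inverse> h (a mod B) \<longleftrightarrow> a \<in> h"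
    using row_parity_conversep_burst [OF assms(1) _ \<open>finite h\<close>] h by auto
  moreover have "a + B \<le> D + a mod B" using assms(3) div_times_less_eq_dividend [of D B] by linarith
  ultimately show ?thesis using parities [of "a mod B"] assms(1) by auto
qed

lemma burst_start_in_tail:
  assumes "0 < B" "B \<le> D" "D div B * B \<le> a" "a < D" and h: "h \<subseteq> {a..<a + B} \<inter> {..<D}"
    and parities: "\<And>r. r < B \<Longrightarrow> a + B \<le> D + r \<Longrightarrow> r \<le> a \<Longrightarrow>
      \<not> row_parity (parity_matrix D B)\<inverse>\<inverse> h r"
  shows "a \<notin> h"
proof -
  define C where "C = D div B * B"
  define b where "b = D mod B"
  define m where "m = D - a"
  define tail where "tail = {i. C + i \<in> h}"
  have "D = C + b" "b < B" using assms(1) by (simp_all add: C_def b_def)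
  have "B \<le> C" using assms(1,2) by (simp add: C_def le_div_mult_self)
  have "finite h" using h by (intro finite_subset [of h "{..<D}"]) auto
  have "C \<le> a" using assms(3) by (simp add: C_def)
  then have "0 < b" "m \<le> b" using assms(4) \<open>D = C + b\<close> unfolding m_def by linarith+
  have "\<not> row_parity (parity_matrix B b) tail r" if "B - m \<le> r" "r < B" for r
  proof -
    have "row_parity (parity_matrix D B)\<inverse>\<inverse> h r \<longleftrightarrow> row_parity (parity_matrix B b) tail r"
      using row_parity_conversep_burst [OF assms(1) _ \<open>finite h\<close>, of a D r] h assms(3)
      by (auto simp: C_def b_def tail_def)
    moreover have "a + B \<le> D + r" "r \<le> a"
      using that \<open>m \<le> b\<close> \<open>b < B\<close> \<open>B \<le> C\<close> \<open>C \<le> a\<close> assms(4) unfolding m_def by linarith+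
    ultimately show ?thesis using parities that by blast
  qed
  moreover have "tail \<subseteq> {b - m..<b}"
  proof
    fix i assume "i \<in> tail"
    then have "a \<le> C + i" "C + i < D" using h by (auto simp: tail_def)
    then show "i \<in> {b - m..<b}" using \<open>D = C + b\<close> by (simp add: m_def)
  qed
  moreover have "nonsingular_on (parity_matrix B b) {B - m..<B} {b - m..<b}"
    using nonsingular_on_corner [of b B m] \<open>0 < b\<close> \<open>b < B\<close> \<open>m \<le> b\<close> by simp
  ultimately have "tail = {}" by (intro nonsingular_onD) auto
  moreover have "a = C + (a - C)" using \<open>C \<le> a\<close> by simp
  ultimately show ?thesis unfolding tail_def by (metis empty_iff mem_Collect_eq)
qed

lemma burst_start_across_tail:
  assumes "0 < B" "B \<le> D" "a < D div B * B" "D div B * B < a + B"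
    and h: "h \<subseteq> {a..<a + B} \<inter> {..<D}"
    and parities: "\<And>r. r < B \<Longrightarrow> a + B \<le> D + r \<Longrightarrow> r \<le> a \<Longrightarrow>
      \<not> row_parity (parity_matrix D B)\<inverse>\<inverse> h r"
  shows "a \<notin> h"
proof -
  define C where "C = D div B * B"
  define b where "b = D mod B"
  define al where "al = a - (C - B)"
  define tail where "tail = {i. C + i \<in> h}"
  have "D = C + b" "b < B" using assms(1) by (simp_all add: C_def b_def)
  have "B \<le> C" using assms(1,2) by (simp add: C_def le_div_mult_self)
  have "finite h" using h by (intro finite_subset [of h "{..<D}"]) auto
  have "al < B" "a = C - B + al" using assms(3,4) by (simp_all add: al_def C_def)
  have residue: "p mod B = p - (C - B)" if "a \<le> p" "p < C" for p
    using mod_last_period [OF \<open>B \<le> C\<close>, of "p - (C - B)"] \<open>a = C - B + al\<close> that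
    by (simp add: C_def)
  have split: "row_parity (parity_matrix D B)\<inverse>\<inverse> h r \<longleftrightarrow>
      (\<exists>p \<in> h. p < C \<and> p mod B = r) \<noteq> row_parity (parity_matrix B b) tail r" for r
    using row_parity_conversep_burst [OF assms(1) _ \<open>finite h\<close>] h by (auto simp: C_def b_def tail_def)
  have "tail \<subseteq> {..<min al b}"
  proof
    fix i assume "i \<in> tail"
    then have "C + i < a + B" "C + i < D" using h by (auto simp: tail_def)
    then show "i \<in> {..<min al b}" using \<open>a = C - B + al\<close> \<open>D = C + b\<close> \<open>B \<le> C\<close> by simp
  qed
  moreover have "\<not> row_parity (parity_matrix B b) tail r" if "al - b \<le> r" "r < al" for r
  proof -
    have "p mod B \<noteq> r" if "p \<in> h" "p < C" for p
    proof -
      have "a \<le> p" using h that(1) by auto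
      then show ?thesis using residue [OF _ that(2)] \<open>a = C - B + al\<close> \<open>r < al\<close> by linarith
    qed
    moreover have "a + B \<le> D + r" "r \<le> a" "r < B"
      using that \<open>a = C - B + al\<close> \<open>D = C + b\<close> \<open>B \<le> C\<close> \<open>al < B\<close> by linarith+
    ultimately show ?thesis using parities split by blast
  qed
  moreover have "nonsingular_on (parity_matrix B b) {al - b..<al} {..<min al b}"
    using nonsingular_on_truncated_window \<open>b < B\<close> \<open>al < B\<close> by simp
  ultimately have "tail = {}" by (intro nonsingular_onD) auto
  moreover have "(\<exists>p \<in> h. p < C \<and> p mod B = al) \<longleftrightarrow> a \<in> h"
  proof -
    have "p = a" if "p \<in> h" "p < C" "p mod B = al" for p
    proof -
      have "a \<le> p" using h that(1) by auto
      then show ?thesis using residue [OF _ that(2)] that(3) \<open>a = C - B + al\<close> by linarith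
    qed
    moreover have "a < C" "a mod B = al"
      using assms(3) residue [of a] \<open>a = C - B + al\<close> by (simp_all add: C_def)
    ultimately show ?thesis by blast
  qed
  ultimately have "row_parity (parity_matrix D B)\<inverse>\<inverse> h al \<longleftrightarrow> a \<in> h" using split by simp
  moreover have "a + B \<le> D + al" "al \<le> a"
    using \<open>a = C - B + al\<close> \<open>D = C + b\<close> \<open>B \<le> C\<close> by linarith+
  ultimately show ?thesis using parities [of al] \<open>al < B\<close> by auto
qed

lemma parity_matrix_recovers_burst_start:
  assumes "0 < B" "B \<le> D" "a < D" and h: "h \<subseteq> {a..<a + B} \<inter> {..<D}"
    and parities: "\<And>r. r < B \<Longrightarrow> a + B \<le> D + r \<Longrightarrow> r \<le> a \<Longrightarrow>
      \<not> row_parity (parity_matrix D B)\<inverse>\<inverse> h r"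
  shows "a \<notin> h"
proof -
  consider "a + B \<le> D div B * B" | "D div B * B \<le> a" | "a < D div B * B" "D div B * B < a + B"
    by linarith
  then show ?thesis
    using burst_start_in_period [OF assms(1,2) _ h parities]
      burst_start_in_tail [OF assms(1,2) _ assms(3) h parities]
      burst_start_across_tail [OF assms(1,2) _ _ h parities]
    by cases blast+
qed

lemma streaming_prefix_unique:
  assumes recovers: "\<And>s s' E i. \<forall>j. s j \<in> alph q k \<Longrightarrow> \<forall>j. s' j \<in> alph q k \<Longrightarrow>
      admissible_burst B W E \<Longrightarrow> \<forall>j<i. s j = s' j \<Longrightarrow>
      \<forall>t\<le>i + T. \<not> E t \<longrightarrow> f t s = f t s' \<Longrightarrow> s i = s' i"
    and "\<forall>j. s j \<in> alph q k" "\<forall>j. s' j \<in> alph q k" "admissible_burst B W E"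
    and received: "\<And>t. t \<le> i + T \<Longrightarrow> \<not> E t \<Longrightarrow> f t s = f t s'"
    and "j \<le> i"
  shows "s j = s' j"
  using \<open>j \<le> i\<close>
proof (induction j rule: less_induct)
  case (less j)
  have "\<forall>j'<j. s j' = s' j'" using less by auto
  moreover have "\<forall>t\<le>j + T. \<not> E t \<longrightarrow> f t s = f t s'" using received less.prems by auto
  ultimately show ?case using recovers assms(2-4) by blast
qed

lemma ex_streaming_decoder:
  assumes causal: "\<And>i s s'. \<forall>j\<le>i. s j = s' j \<Longrightarrow> f i s = f i s'"
    and range: "\<And>i s. \<forall>j. s j \<in> alph q k \<Longrightarrow> f i s \<in> alph q n"
    and recovers: "\<And>s s' E i. \<forall>j. s j \<in> alph q k \<Longrightarrow> \<forall>j. s' j \<in> alph q k \<Longrightarrow>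
      admissible_burst B W E \<Longrightarrow> \<forall>j<i. s j = s' j \<Longrightarrow>
      \<forall>t\<le>i + T. \<not> E t \<longrightarrow> f t s = f t s' \<Longrightarrow> s i = s' i"
  shows "\<exists>g. streaming_code q k n B W T f g"
proof -
  define consistent where "consistent i y s \<longleftrightarrow> (\<forall>j. s j \<in> alph q k) \<and>
    (\<exists>E. admissible_burst B W E \<and> (\<forall>j\<le>i + T. channel_out E (\<lambda>j. f j s) j = y j))" for i y s
  define g where "g i y = (SOME s. consistent i y s) i" for i y
  have unique: "s' i = s i" if s: "\<forall>j. s j \<in> alph q k" and E: "admissible_burst B W E"
    and s': "consistent i (channel_out E (\<lambda>j. f j s)) s'" for s s' E i
  proof -
    obtain E' where E': "\<forall>j\<le>i + T. channel_out E' (\<lambda>j. f j s') j = channel_out E (\<lambda>j. f j s) j"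
      using s' unfolding consistent_def by blast
    have received: "f t s = f t s'" if "t \<le> i + T" "\<not> E t" for t
    proof -
      have "channel_out E' (\<lambda>j. f j s') t = Some (f t s)"
        using E' that by (simp add: channel_out_def)
      then show ?thesis by (simp add: channel_out_def split: if_splits)
    qed
    have "\<forall>j. s' j \<in> alph q k" using s' by (simp add: consistent_def)
    have "s i = s' i"
      by (rule streaming_prefix_unique [where q = q and k = k and B = B and W = W and T = T
            and f = f and s = s and s' = s' and E = E and i = i and j = i])
        (fact recovers s E received \<open>\<forall>j. s' j \<in> alph q k\<close> | simp)+
    then show ?thesis by simp
  qed
  have "streaming_code q k n B W T f g"
    unfolding streaming_code_def
  proof (intro conjI allI impI)
    fix i and y y' :: "nat \<Rightarrow> nat list option" assume "\<forall>j\<le>i + T. y j = y' j"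
    then have "consistent i y = consistent i y'" by (auto simp: consistent_def fun_eq_iff)
    then show "g i y = g i y'" by (simp add: g_def)
  next
    fix s :: "nat \<Rightarrow> nat list" and E i
    assume s: "\<forall>j. s j \<in> alph q k" and E: "admissible_burst B W E"
    then have "consistent i (channel_out E (\<lambda>j. f j s)) s" by (auto simp: consistent_def)
    then have "consistent i (channel_out E (\<lambda>j. f j s)) (SOME s'. consistent i (channel_out E (\<lambda>j. f j s)) s')"
      by (rule someI [where P = "consistent i (channel_out E (\<lambda>j. f j s))"])
    then show "g i (channel_out E (\<lambda>j. f j s)) = s i" using unique [OF s E] by (simp add: g_def)
  qed (use causal range in auto)
  then show ?thesis by blast
qed

lemma burst_after:
  assumes "admissible_burst B W E" "E i" "i + B \<le> t" "t < i + W"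
  shows "\<not> E t"
proof
  assume "E t"
  obtain j l where "l \<le> B" and burst: "{t. i \<le> t \<and> t < i + W \<and> E t} = {j..<j + l}"
    using assms(1) unfolding admissible_burst_def by blast
  have "i \<in> {j..<j + l}" "t \<in> {j..<j + l}"
    using assms \<open>E t\<close> unfolding burst [symmetric] by auto
  then show False using \<open>l \<le> B\<close> assms(3) by simp
qed

text \<open>Codeword u consists of the bits s (u + p) ! p, p < D, followed by its parities, the
  r-th sent at time u + D + r; bits at negative times count as zero. diagonal_ones D s t d is
  the support of the information part of the codeword whose position d is sent at time t.\<close>

definition diagonal_ones :: "nat \<Rightarrow> (nat \<Rightarrow> nat list) \<Rightarrow> nat \<Rightarrow> nat \<Rightarrow> nat set" where
  "diagonal_ones D s t d = {p. p < D \<and> d \<le> t + p \<and> s (t + p - d) ! p = 1}"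

definition parity_bit :: "nat \<Rightarrow> nat \<Rightarrow> (nat \<Rightarrow> nat list) \<Rightarrow> nat \<Rightarrow> nat \<Rightarrow> bool" where
  "parity_bit D B s t r \<longleftrightarrow> row_parity (parity_matrix D B)\<inverse>\<inverse> (diagonal_ones D s t (D + r)) r"

definition burst_encoder :: "nat \<Rightarrow> nat \<Rightarrow> nat \<Rightarrow> (nat \<Rightarrow> nat list) \<Rightarrow> nat list" where
  "burst_encoder D B t s = s t @ map (\<lambda>r. of_bool (parity_bit D B s t r)) [0..<B]"

lemma finite_diagonal_ones: "finite (diagonal_ones D s t d)"
  by (rule finite_subset [of _ "{..<D}"]) (auto simp: diagonal_ones_def)

lemma diagonal_ones_shift: "diagonal_ones D s (t + c) (d + c) = diagonal_ones D s t d"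
  by (simp add: diagonal_ones_def)

lemma burst_encoder_causal:
  assumes "\<forall>j\<le>t. s j = s' j"
  shows "burst_encoder D B t s = burst_encoder D B t s'"
proof -
  have "diagonal_ones D s t (D + r) = diagonal_ones D s' t (D + r)" for r
  proof -
    have "t + p - (D + r) \<le> t" if "p < D" for p using that by linarith
    then show ?thesis using assms by (auto simp: diagonal_ones_def)
  qed
  then show ?thesis using assms by (simp add: burst_encoder_def parity_bit_def)
qed

lemma burst_encoder_alph:
  assumes "\<forall>j. s j \<in> alph 2 D"
  shows "burst_encoder D B t s \<in> alph 2 (D + B)"
  using assms by (auto simp: burst_encoder_def alph_def)

lemma burst_encoder_eq_iff:
  assumes "length (s t) = D" "length (s' t) = D"
  shows "burst_encoder D B t s = burst_encoder D B t s' \<longleftrightarrow>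
    s t = s' t \<and> (\<forall>r<B. parity_bit D B s t r = parity_bit D B s' t r)"
  using assms by (auto simp: burst_encoder_def)

lemma burst_encoder_recovers_diagonal_start:
  assumes "0 < B" "B \<le> D" "a < D"
    and earlier: "\<forall>j<i. s j = s' j"
    and after_burst: "\<And>t. i + B \<le> t \<Longrightarrow> t \<le> i + D \<Longrightarrow>
      s t = s' t \<and> (\<forall>r<B. parity_bit D B s t r = parity_bit D B s' t r)"
  shows "a \<notin> sym_diff (diagonal_ones D s i a) (diagonal_ones D s' i a)"
proof -
  define h where "h = sym_diff (diagonal_ones D s i a) (diagonal_ones D s' i a)"
  have window: "h \<subseteq> {a..<a + B} \<inter> {..<D}"
  proof
    fix p assume "p \<in> h"
    then have "p < D" "a \<le> i + p" and differs: "s (i + p - a) \<noteq> s' (i + p - a)"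
      by (auto simp: h_def diagonal_ones_def)
    moreover have "\<not> p < a"
    proof
      assume "p < a"
      then have "i + p - a < i" using \<open>a \<le> i + p\<close> by linarith
      then show False using earlier differs by blast
    qed
    moreover have "\<not> a + B \<le> p"
    proof
      assume "a + B \<le> p"
      then have "i + B \<le> i + p - a" "i + p - a \<le> i + D" using \<open>p < D\<close> by linarith+
      then show False using after_burst differs by blast
    qed
    ultimately show "p \<in> {a..<a + B} \<inter> {..<D}" by simp
  qed
  have checks: "\<not> row_parity (parity_matrix D B)\<inverse>\<inverse> h r"
    if "r < B" "a + B \<le> D + r" "r \<le> a" for r
  proof -
    have shift: "diagonal_ones D v (i + (D + r - a)) (D + r) = diagonal_ones D v i a" for v
      using diagonal_ones_shift [of D v i "D + r - a" a] \<open>a < D\<close> by simp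
    have "parity_bit D B s (i + (D + r - a)) r = parity_bit D B s' (i + (D + r - a)) r"
      using after_burst that \<open>a < D\<close> by simp
    then show ?thesis
      by (simp add: h_def parity_bit_def shift row_parity_sym_diff finite_diagonal_ones)
  qed
  show ?thesis
    using parity_matrix_recovers_burst_start [OF assms(1-3) window checks] unfolding h_def .
qed

lemma burst_encoder_recovers:
  assumes "0 < B" "B \<le> D" "D \<le> T" "D < W"
    and s: "\<forall>j. s j \<in> alph 2 D" and s': "\<forall>j. s' j \<in> alph 2 D"
    and E: "admissible_burst B W E"
    and earlier: "\<forall>j<i. s j = s' j"
    and received: "\<forall>t\<le>i + T. \<not> E t \<longrightarrow> burst_encoder D B t s = burst_encoder D B t s'"
  shows "s i = s' i"
proof -
  have length: "length (s t) = D" "length (s' t) = D" for t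
    using s s' by (simp_all add: alph_def)
  have unerased: "s t = s' t \<and> (\<forall>r<B. parity_bit D B s t r = parity_bit D B s' t r)"
    if "t \<le> i + T" "\<not> E t" for t
  proof -
    have "burst_encoder D B t s = burst_encoder D B t s'" using received that by simp
    then show ?thesis by (rule burst_encoder_eq_iff [OF length, THEN iffD1])
  qed
  show ?thesis
  proof (cases "E i")
    case False
    then show ?thesis using unerased by simp
  next
    case True
    show ?thesis
    proof (rule nth_equalityI)
      show "length (s i) = length (s' i)" by (simp add: length)
      fix a assume "a < length (s i)"
      then have "a < D" by (simp add: length)
      have "a \<notin> sym_diff (diagonal_ones D s i a) (diagonal_ones D s' i a)"
        using burst_encoder_recovers_diagonal_start [OF assms(1,2) \<open>a < D\<close> earlier]
          unerased burst_after [OF E True] assms(3,4) by simp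
      then have "s i ! a = 1 \<longleftrightarrow> s' i ! a = 1" using \<open>a < D\<close> by (auto simp: diagonal_ones_def)
      moreover have "s i ! a \<in> set (s i)" "s' i ! a \<in> set (s' i)" using \<open>a < D\<close> length by simp_all
      then have "s i ! a < 2" "s' i ! a < 2" using s s' by (auto simp: alph_def)
      ultimately show "s i ! a = s' i ! a" by auto
    qed
  qed
qed

lemma burst_code_exists:
  assumes "0 < B" "B \<le> D" "D \<le> T" "D < W"
  shows "\<exists>g. streaming_code 2 D (D + B) B W T (\<lambda>t s. burst_encoder D B t s) g"
  using assms
  by (intro ex_streaming_decoder burst_encoder_causal burst_encoder_alph burst_encoder_recovers)
    auto

theorem proposition1:
  fixes B W T :: nat
  assumes "B > 0" and "W > 0" and "T > 0" and "W \<ge> B + 1"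
  shows "let Teff = min (W - 1) T;
             R = (if Teff \<ge> B then real Teff / real (Teff + B) else 0)
         in \<exists>q k n f g. primepow q \<and> n > 0 \<and> streaming_code q k n B W T f g
                        \<and> real k / real n = R"
proof -
  define D where "D = min (W - 1) T"
  have "primepow (2::nat)" by simp
  show ?thesis
  proof (cases "B \<le> D")
    case True
    moreover have "D \<le> T" "D < W" using assms(2) by (simp_all add: D_def)
    ultimately obtain g where "streaming_code 2 D (D + B) B W T (\<lambda>t s. burst_encoder D B t s) g"
      using burst_code_exists [of B D T W] assms(1) by blast
    then show ?thesis
      using True \<open>primepow 2\<close> assms(1) unfolding Let_def D_def [symmetric]
      by (intro exI [of _ 2] exI [of _ D] exI [of _ "D + B"]) auto
  next
    case False
    have "streaming_code 2 0 1 B W T (\<lambda>i s. [0]) (\<lambda>i y. [])"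
      by (simp add: streaming_code_def alph_def)
    then show ?thesis
      using False \<open>primepow 2\<close> unfolding Let_def D_def [symmetric]
      by (intro exI [of _ 2] exI [of _ 0] exI [of _ 1]) auto
  qed
qed

end
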